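(* Let $d=2$, $r>\frac32$, $\beta>0$, let $\eta$ be a complex-valued mean-zero function on $\Omega=[0,2\pi]^2$ with $\|\Lambda^{1/2}\eta\|_\beta<\infty$, and let $\mathbf u=(-R_2\eta,R_1\eta)$. Then $$|\langle \mathbf u\cdot\nabla\eta,\ \Lambda^{2r}e^{2\beta\Lambda}\eta\rangle|\le C\,2^rC_W(r)\,\|\eta\|_\beta\,\|\Lambda^{1/2}\eta\|_\beta^2,$$ with $C>0$ an absolute constant.
   Context: Periodic functions on $\Omega=[0,2\pi]^2$ with zero mean; $\langle\cdot,\cdot\rangle$ is the complex $L^2$ inner product. $\Lambda=(-\Delta)^{1/2}$ acts on Fourier coefficients by multiplication by $|\mathbf k|$; $R_j=\partial_j\Lambda^{-1}$ are the Riesz transforms (multiplier $ik_j/|\mathbf k|$). $\|\eta\|_\beta=\|\Lambda^re^{\beta\Lambda}\eta\|$, i.e. $\|\eta\|_\beta^2=(2\pi)^2\sum_{\mathbf k\ne0}|\mathbf k|^{2r}e^{2\beta|\mathbf k|}|\hat\eta(\mathbf k)|^2$. $C_W(r)=\frac{1}{2\pi}\frac{2r-2}{2r-3}$ (the general formula $\frac{1}{\pi2^{d-1}}\frac{2r-d}{2r-1-d}$ with $d=2$). *)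

theory Defs
  imports "HOL-Analysis.Analysis"
begin

text \<open>Periodic functions on [0,2pi]^2 are represented by their Fourier coefficients
  eta_hat :: int \<times> int \<Rightarrow> complex, with eta(x) = sum_k eta_hat(k) e^{i k.x}.
  Mean zero means eta_hat(0,0) = 0.\<close>

definition knorm :: "int \<times> int \<Rightarrow> real" where
  "knorm k = sqrt ((real_of_int (fst k))\<^sup>2 + (real_of_int (snd k))\<^sup>2)"

text \<open>Complex L2 inner product on the torus in Fourier variables (Parseval).\<close>
definition l2_inner :: "(int \<times> int \<Rightarrow> complex) \<Rightarrow> (int \<times> int \<Rightarrow> complex) \<Rightarrow> complex" where
  "l2_inner f g = complex_of_real ((2*pi)\<^sup>2) * (\<Sum>\<^sub>\<infinity>k. f k * cnj (g k))"

definition Lambda_pow :: "real \<Rightarrow> (int \<times> int \<Rightarrow> complex) \<Rightarrow> (int \<times> int \<Rightarrow> complex)" where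
  "Lambda_pow s f = (\<lambda>k. complex_of_real (knorm k powr s) * f k)"

definition exp_Lambda :: "real \<Rightarrow> (int \<times> int \<Rightarrow> complex) \<Rightarrow> (int \<times> int \<Rightarrow> complex)" where
  "exp_Lambda b f = (\<lambda>k. complex_of_real (exp (b * knorm k)) * f k)"

definition riesz1 :: "(int \<times> int \<Rightarrow> complex) \<Rightarrow> (int \<times> int \<Rightarrow> complex)" where
  "riesz1 f = (\<lambda>k. if k = (0,0) then 0 else \<i> * of_int (fst k) / complex_of_real (knorm k) * f k)"

definition riesz2 :: "(int \<times> int \<Rightarrow> complex) \<Rightarrow> (int \<times> int \<Rightarrow> complex)" where
  "riesz2 f = (\<lambda>k. if k = (0,0) then 0 else \<i> * of_int (snd k) / complex_of_real (knorm k) * f k)"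

definition partial1 :: "(int \<times> int \<Rightarrow> complex) \<Rightarrow> (int \<times> int \<Rightarrow> complex)" where
  "partial1 f = (\<lambda>k. \<i> * of_int (fst k) * f k)"

definition partial2 :: "(int \<times> int \<Rightarrow> complex) \<Rightarrow> (int \<times> int \<Rightarrow> complex)" where
  "partial2 f = (\<lambda>k. \<i> * of_int (snd k) * f k)"

text \<open>Fourier coefficients of a pointwise product = convolution of coefficients.\<close>
definition fconv :: "(int \<times> int \<Rightarrow> complex) \<Rightarrow> (int \<times> int \<Rightarrow> complex) \<Rightarrow> (int \<times> int \<Rightarrow> complex)" where
  "fconv f g = (\<lambda>k. \<Sum>\<^sub>\<infinity>j. f j * g (fst k - fst j, snd k - snd j))"

definition advect :: "(int \<times> int \<Rightarrow> complex) \<Rightarrow> (int \<times> int \<Rightarrow> complex) \<Rightarrow> (int \<times> int \<Rightarrow> complex) \<Rightarrow> (int \<times> int \<Rightarrow> complex)" where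
  "advect u1 u2 f = (\<lambda>k. fconv u1 (partial1 f) k + fconv u2 (partial2 f) k)"

definition gev_norm_sq :: "real \<Rightarrow> real \<Rightarrow> (int \<times> int \<Rightarrow> complex) \<Rightarrow> real" where
  "gev_norm_sq r b f = (2*pi)\<^sup>2 * (\<Sum>\<^sub>\<infinity>k\<in>-{(0,0)}. knorm k powr (2*r) * exp (2*b*knorm k) * (cmod (f k))\<^sup>2)"

definition gev_norm :: "real \<Rightarrow> real \<Rightarrow> (int \<times> int \<Rightarrow> complex) \<Rightarrow> real" where
  "gev_norm r b f = sqrt (gev_norm_sq r b f)"

definition C_W :: "real \<Rightarrow> real" where
  "C_W r = 1/(2*pi) * ((2*r-2)/(2*r-3))"

end

theory Submission
  imports Defs
begin

text \<open>In Fourier variables the pairing is a sum over triads j + l = k. Because u is divergence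
  free, the symbol of u_j . grad at mode l is a cross product divided by |j|, so a triad is bounded
  by |eta_j| |l| |eta_l|. Since |k| <= |j| + |l|, the weight |l| |k|^{2r} e^{2 beta |k|} is at most
  2^r |k|^{r+1/2} (|l|^{r+1/2} + |j|^r |l|^{1/2}) e^{beta |j|} e^{beta |l|} e^{beta |k|}, according
  to which of |j|, |l| dominates. Both resulting trilinear sums are estimated by Young's inequality
  l^1 * l^2 . l^2, and the l^1 factor by Cauchy-Schwarz against the lattice sum
  sum_{k <> 0} |k|^{-2r} <= sum_{k <> 0} |k|^{-3}, which is finite in dimension two.\<close>

lemma knorm_nonneg: "0 \<le> knorm k"
  by (simp add: knorm_def)

lemma knorm_zero [simp]: "knorm 0 = 0"
  by (simp add: knorm_def zero_prod_def)

lemma knorm_ge_1: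
  assumes "k \<noteq> 0"
  shows "1 \<le> knorm k"
proof -
  have "fst k \<noteq> 0 \<or> snd k \<noteq> 0"
    using assms by (simp add: prod_eq_iff)
  then have "1 \<le> (fst k)\<^sup>2 + (snd k)\<^sup>2"
    by (smt (verit, best) power2_less_eq_zero_iff zero_le_power2 int_one_le_iff_zero_less)
  then have "1 \<le> (real_of_int (fst k))\<^sup>2 + (real_of_int (snd k))\<^sup>2"
    by (metis of_int_1_le_iff of_int_add of_int_power)
  then show ?thesis
    by (simp add: knorm_def)
qed

lemma knorm_eq_cmod: "knorm k = cmod (Complex (of_int (fst k)) (of_int (snd k)))"
  by (simp add: knorm_def complex_norm)

lemma knorm_triangle_diff: "knorm k \<le> knorm j + knorm (k - j)"
proof -
  have "Complex (of_int (fst k)) (of_int (snd k))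
      = Complex (of_int (fst j)) (of_int (snd j)) + Complex (of_int (fst (k - j))) (of_int (snd (k - j)))"
    by (simp add: complex_eq_iff)
  then show ?thesis
    unfolding knorm_eq_cmod by (metis norm_triangle_ineq)
qed

lemma abs_fst_le_knorm: "\<bar>real_of_int (fst k)\<bar> \<le> knorm k"
  unfolding knorm_def by (rule real_sqrt_ge_abs1)

lemma abs_snd_le_knorm: "\<bar>real_of_int (snd k)\<bar> \<le> knorm k"
  unfolding knorm_def by (rule real_sqrt_ge_abs2)

lemma abs_cross_le_knorm:
  "\<bar>of_int (snd j) * of_int (fst l) - of_int (fst j) * of_int (snd l)\<bar> \<le> knorm j * knorm (l :: int \<times> int)"
proof -
  let ?z = "\<lambda>k :: int \<times> int. Complex (of_int (fst k)) (of_int (snd k))"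
  have "of_int (snd j) * of_int (fst l) - of_int (fst j) * of_int (snd l) = Im (cnj (?z l) * ?z j)"
    by simp
  also have "\<bar>\<dots>\<bar> \<le> cmod (cnj (?z l) * ?z j)"
    by (rule abs_Im_le_cmod)
  finally show ?thesis
    by (simp add: knorm_eq_cmod norm_mult mult.commute)
qed

lemma summable_on_int_powr:
  assumes "p < -1"
  shows "(\<lambda>a :: int. (1 + \<bar>real_of_int a\<bar>) powr p) summable_on UNIV"
proof -
  let ?g = "\<lambda>a :: int. (1 + \<bar>real_of_int a\<bar>) powr p"
  have "summable (\<lambda>n. real (Suc n) powr p)"
    using assms by (simp only: summable_Suc_iff[of "\<lambda>n. real n powr p"] summable_real_powr_iff)
  then have nat: "(\<lambda>n. (1 + real n) powr p) summable_on UNIV"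
    by (simp add: summable_on_UNIV_nonneg_real_iff add.commute)
  have "?g summable_on range int"
    using nat by (simp add: summable_on_reindex o_def)
  moreover have "?g summable_on range (\<lambda>n. - int n)"
    using nat by (simp add: summable_on_reindex inj_on_def o_def)
  moreover have "range int \<union> range (\<lambda>n. - int n) = UNIV"
    by (auto simp: image_def) (metis nonneg_int_cases minus_minus neg_0_le_iff_le linorder_le_cases)
  ultimately show ?thesis
    by (metis summable_on_union)
qed

lemma summable_on_knorm_powr:
  assumes "p < -2"
  shows "(\<lambda>k. knorm k powr p) summable_on UNIV"
  \<comment> \<open>dominated by a multiple of the product (1 + |k_1|)^{p/2} (1 + |k_2|)^{p/2}\<close>
proof (rule summable_on_comparison_test)
  define g where "g a = (1 + \<bar>real_of_int a\<bar>) powr (p/2)" for a :: int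
  have g: "g summable_on UNIV"
    unfolding g_def using assms by (intro summable_on_int_powr) simp
  have "(\<lambda>k. g (fst k) * g (snd k)) summable_on UNIV \<times> UNIV"
  proof (rule summable_on_SigmaI)
    show "((\<lambda>b. g (fst (a, b)) * g (snd (a, b))) has_sum g a * infsum g UNIV) UNIV" for a
      using has_sum_cmult_right[OF has_sum_infsum[OF g]] by simp
    show "(\<lambda>a. g a * infsum g UNIV) summable_on UNIV"
      using g by (rule summable_on_cmult_left)
  qed (simp add: g_def)
  then show "(\<lambda>k. 2 powr (-p) * (g (fst k) * g (snd k))) summable_on UNIV"
    by (intro summable_on_cmult_right) simp
  fix k :: "int \<times> int"
  show "0 \<le> knorm k powr p"
    by simp
  show "knorm k powr p \<le> 2 powr (-p) * (g (fst k) * g (snd k))"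
  proof (cases "k = 0")
    case True
    then show ?thesis by (simp add: g_def)
  next
    case False
    define n where "n = knorm k"
    have n: "1 \<le> n"
      using knorm_ge_1[OF False] by (simp add: n_def)
    have "(1 + \<bar>real_of_int (fst k)\<bar>) * (1 + \<bar>real_of_int (snd k)\<bar>) \<le> (2*n) * (2*n)"
      using abs_fst_le_knorm[of k] abs_snd_le_knorm[of k] n by (intro mult_mono) (auto simp: n_def)
    then have "((2*n) * (2*n)) powr (p/2) \<le> g (fst k) * g (snd k)"
      unfolding g_def using assms n by (simp add: powr_mult[symmetric] powr_mono2')
    moreover have "((2*n) * (2*n)) powr (p/2) = 2 powr p * n powr p"
      using n by (simp add: powr_mult powr_add[symmetric])
    ultimately have le: "2 powr p * n powr p \<le> g (fst k) * g (snd k)"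
      by simp
    have "knorm k powr p = 2 powr (-p) * (2 powr p * n powr p)"
      by (simp add: n_def mult.assoc[symmetric] powr_add[symmetric])
    also have "\<dots> \<le> 2 powr (-p) * (g (fst k) * g (snd k))"
      using le by (intro mult_left_mono) auto
    finally show ?thesis .
  qed
qed

text \<open>The origin contributes nothing, since 0 powr x = 0.\<close>

definition lattice_zeta :: "real \<Rightarrow> real" where
  "lattice_zeta s = (\<Sum>\<^sub>\<infinity>k. knorm k powr (- s))"

lemma lattice_zeta_antimono:
  assumes "2 < s" "s \<le> t"
  shows "lattice_zeta t \<le> lattice_zeta s"
  unfolding lattice_zeta_def
proof (rule infsum_mono)
  show "(\<lambda>k. knorm k powr (- t)) summable_on UNIV" "(\<lambda>k. knorm k powr (- s)) summable_on UNIV"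
    using assms by (auto intro: summable_on_knorm_powr)
  show "knorm k powr (- t) \<le> knorm k powr (- s)" for k
  proof (cases "k = 0")
    case False
    then show ?thesis
      using assms by (intro powr_mono knorm_ge_1) simp_all
  qed simp
qed

lemma lattice_zeta_ge_1:
  assumes "2 < s"
  shows "1 \<le> lattice_zeta s"
proof -
  have "(\<Sum>k\<in>{(1,0)}. knorm k powr (- s)) \<le> lattice_zeta s"
    unfolding lattice_zeta_def using assms by (intro finite_sum_le_infsum summable_on_knorm_powr) auto
  then show ?thesis
    by (simp add: knorm_def)
qed

lemma sum_mult_le_sqrt_infsum:
  fixes a b :: "'a \<Rightarrow> real"
  assumes "finite L" "(\<lambda>x. (a x)\<^sup>2) summable_on UNIV" "(\<lambda>x. (b x)\<^sup>2) summable_on UNIV"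
  shows "(\<Sum>x\<in>L. a x * b x) \<le> sqrt (\<Sum>\<^sub>\<infinity>x. (a x)\<^sup>2) * sqrt (\<Sum>\<^sub>\<infinity>x. (b x)\<^sup>2)"
proof -
  have "(\<Sum>x\<in>L. a x * b x) \<le> sqrt ((\<Sum>x\<in>L. (a x)\<^sup>2) * (\<Sum>x\<in>L. (b x)\<^sup>2))"
    by (rule real_le_rsqrt[OF Cauchy_Schwarz_ineq_sum])
  also have "\<dots> \<le> sqrt ((\<Sum>\<^sub>\<infinity>x. (a x)\<^sup>2) * (\<Sum>\<^sub>\<infinity>x. (b x)\<^sup>2))"
    using assms by (intro real_sqrt_le_mono mult_mono finite_sum_le_infsum infsum_nonneg sum_nonneg) auto
  finally show ?thesis
    by (simp add: real_sqrt_mult)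
qed

lemma sum_le_sqrt_lattice_zeta:
  fixes P :: "int \<times> int \<Rightarrow> real"
  assumes "finite L" "1 < r" "P 0 = 0"
    and "(\<lambda>k. (knorm k powr r * P k)\<^sup>2) summable_on UNIV"
  shows "(\<Sum>k\<in>L. P k) \<le> sqrt (lattice_zeta (2*r)) * sqrt (\<Sum>\<^sub>\<infinity>k. (knorm k powr r * P k)\<^sup>2)"
proof -
  have sq: "(knorm k powr (-r))\<^sup>2 = knorm k powr (- (2*r))" for k
    by (simp add: power2_eq_square powr_add[symmetric])
  have "P k = knorm k powr (-r) * (knorm k powr r * P k)" for k
    using assms(3) knorm_ge_1[of k] by (cases "k = 0") (auto simp: powr_minus)
  then have "(\<Sum>k\<in>L. P k) = (\<Sum>k\<in>L. knorm k powr (-r) * (knorm k powr r * P k))"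
    by (rule sum.cong[OF refl])
  also have "\<dots> \<le> sqrt (lattice_zeta (2*r)) * sqrt (\<Sum>\<^sub>\<infinity>k. (knorm k powr r * P k)\<^sup>2)"
    using sum_mult_le_sqrt_infsum[OF assms(1) _ assms(4), of "\<lambda>k. knorm k powr (-r)"]
      summable_on_knorm_powr[of "- (2*r)"] assms(2)
    by (simp add: sq lattice_zeta_def)
  finally show ?thesis .
qed

lemma sum_convolution_le:
  fixes P Q R :: "'a::ab_group_add \<Rightarrow> real"
  assumes "finite F" "\<And>x. 0 \<le> P x" "\<And>x. 0 \<le> Q x" "\<And>x. 0 \<le> R x"
    and Q: "(\<lambda>x. (Q x)\<^sup>2) summable_on UNIV" and R: "(\<lambda>x. (R x)\<^sup>2) summable_on UNIV"
  shows "(\<Sum>(j,k)\<in>F. P j * Q (k - j) * R k)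
    \<le> (\<Sum>j\<in>fst ` F. P j) * sqrt (\<Sum>\<^sub>\<infinity>x. (Q x)\<^sup>2) * sqrt (\<Sum>\<^sub>\<infinity>x. (R x)\<^sup>2)"
proof -
  let ?N = "sqrt (\<Sum>\<^sub>\<infinity>x. (Q x)\<^sup>2) * sqrt (\<Sum>\<^sub>\<infinity>x. (R x)\<^sup>2)"
  have inner: "(\<Sum>k\<in>K. Q (k - j) * R k) \<le> ?N" if "finite K" for K j
  proof -
    have bij: "bij_betw (\<lambda>k. k - j) UNIV UNIV"
      by (rule bij_diff_right)
    have "(\<lambda>k. (Q (k - j))\<^sup>2) summable_on UNIV"
      using summable_on_reindex_bij_betw[OF bij, of "\<lambda>x. (Q x)\<^sup>2"] Q by simp
    moreover have "(\<Sum>\<^sub>\<infinity>k. (Q (k - j))\<^sup>2) = (\<Sum>\<^sub>\<infinity>x. (Q x)\<^sup>2)"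
      by (rule infsum_reindex_bij_betw[OF bij])
    ultimately show ?thesis
      using sum_mult_le_sqrt_infsum[OF that _ R, of "\<lambda>k. Q (k - j)"] by simp
  qed
  have "(\<Sum>(j,k)\<in>F. P j * Q (k - j) * R k) \<le> (\<Sum>(j,k)\<in>fst ` F \<times> snd ` F. P j * Q (k - j) * R k)"
  proof (rule sum_mono2)
    show "F \<subseteq> fst ` F \<times> snd ` F"
      by force
  qed (use assms(1-4) in \<open>auto intro!: mult_nonneg_nonneg\<close>)
  also have "\<dots> = (\<Sum>j\<in>fst ` F. P j * (\<Sum>k\<in>snd ` F. Q (k - j) * R k))"
    by (simp add: sum.cartesian_product[symmetric] sum_distrib_left mult.assoc)
  also have "\<dots> \<le> (\<Sum>j\<in>fst ` F. P j * ?N)"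
    using assms(1,2) inner by (intro sum_mono mult_left_mono) auto
  finally show ?thesis
    by (simp add: sum_distrib_right mult.assoc)
qed

text \<open>Since 0 powr s = 0, the weight vanishes at the origin for every s, including s = 0.\<close>

definition gev_weight :: "real \<Rightarrow> real \<Rightarrow> (int \<times> int \<Rightarrow> complex) \<Rightarrow> int \<times> int \<Rightarrow> real" where
  "gev_weight s b f k = knorm k powr s * exp (b * knorm k) * cmod (f k)"

definition gev_weight_norm :: "real \<Rightarrow> real \<Rightarrow> (int \<times> int \<Rightarrow> complex) \<Rightarrow> real" where
  "gev_weight_norm s b f = sqrt (\<Sum>\<^sub>\<infinity>k. (gev_weight s b f k)\<^sup>2)"

lemma gev_weight_nonneg: "0 \<le> gev_weight s b f k"
  by (simp add: gev_weight_def)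

lemma gev_weight_norm_nonneg: "0 \<le> gev_weight_norm s b f"
  by (simp add: gev_weight_norm_def infsum_nonneg)

lemma gev_weight_zero [simp]: "gev_weight s b f 0 = 0"
  by (simp add: gev_weight_def)

lemma knorm_powr_mult_gev_weight: "knorm k powr r * gev_weight s b f k = gev_weight (r + s) b f k"
  by (simp add: gev_weight_def powr_add mult.assoc)

lemma gev_weight_Lambda_pow: "gev_weight s b (Lambda_pow t f) k = gev_weight (s + t) b f k"
  by (simp add: gev_weight_def Lambda_pow_def norm_mult powr_add)

lemma gev_weight_norm_Lambda_pow: "gev_weight_norm s b (Lambda_pow t f) = gev_weight_norm (s + t) b f"
  by (simp add: gev_weight_norm_def gev_weight_Lambda_pow)

lemma norm_Lambda_pow_exp_Lambda: "cmod (Lambda_pow s (exp_Lambda b f) k) = gev_weight s b f k"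
  by (simp add: gev_weight_def Lambda_pow_def exp_Lambda_def norm_mult)

lemma knorm_powr_mult_norm_le_gev_weight:
  assumes "k \<noteq> 0" "t \<le> s" "0 \<le> b"
  shows "knorm k powr t * cmod (f k) \<le> gev_weight s b f k"
proof -
  have "knorm k powr t * 1 \<le> knorm k powr s * exp (b * knorm k)"
    using assms knorm_ge_1[OF assms(1)] by (intro mult_mono powr_mono) auto
  then show ?thesis
    unfolding gev_weight_def by (intro mult_right_mono) auto
qed

lemma gev_weight_mono:
  assumes "s \<le> t"
  shows "gev_weight s b f k \<le> gev_weight t b f k"
proof (cases "k = 0")
  case False
  then show ?thesis
    unfolding gev_weight_def using assms knorm_ge_1[OF False]
    by (intro mult_right_mono powr_mono) auto
qed simp

lemma gev_norm_summand_eq: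
  "knorm k powr (2*r) * exp (2*b*knorm k) * (cmod (f k))\<^sup>2 = (gev_weight r b f k)\<^sup>2"
proof -
  have "(knorm k powr r)\<^sup>2 = knorm k powr (2*r)"
    by (metis mult_2 power2_eq_square powr_add)
  moreover have "(exp (b * knorm k))\<^sup>2 = exp (2*b*knorm k)"
    by (metis exp_add mult_2 power2_eq_square mult.assoc)
  ultimately show ?thesis
    by (simp add: gev_weight_def power_mult_distrib)
qed

lemma gev_norm_eq: "gev_norm r b f = 2 * pi * gev_weight_norm r b f"
proof -
  have "(\<Sum>\<^sub>\<infinity>k\<in>-{(0,0)}. knorm k powr (2*r) * exp (2*b*knorm k) * (cmod (f k))\<^sup>2)
      = (\<Sum>\<^sub>\<infinity>k. (gev_weight r b f k)\<^sup>2)"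
    by (rule infsum_cong_neutral) (auto simp: gev_norm_summand_eq zero_prod_def[symmetric])
  then show ?thesis
    by (simp add: gev_norm_def gev_norm_sq_def gev_weight_norm_def real_sqrt_mult)
qed

lemma norm_riesz1_le: "cmod (riesz1 f j) \<le> cmod (f j)"
proof (cases "j = 0")
  case False
  then have "cmod (riesz1 f j) = \<bar>real_of_int (fst j)\<bar> / knorm j * cmod (f j)"
    by (simp add: riesz1_def norm_mult norm_divide zero_prod_def knorm_nonneg)
  moreover have "\<bar>real_of_int (fst j)\<bar> / knorm j \<le> 1"
    using abs_fst_le_knorm[of j] knorm_ge_1[OF False] by simp
  ultimately show ?thesis
    by (metis abs_ge_zero divide_nonneg_nonneg knorm_nonneg mult_left_le_one_le norm_ge_zero)
qed (simp add: riesz1_def zero_prod_def)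

lemma norm_riesz2_le: "cmod (riesz2 f j) \<le> cmod (f j)"
proof (cases "j = 0")
  case False
  then have "cmod (riesz2 f j) = \<bar>real_of_int (snd j)\<bar> / knorm j * cmod (f j)"
    by (simp add: riesz2_def norm_mult norm_divide zero_prod_def knorm_nonneg)
  moreover have "\<bar>real_of_int (snd j)\<bar> / knorm j \<le> 1"
    using abs_snd_le_knorm[of j] knorm_ge_1[OF False] by simp
  ultimately show ?thesis
    by (metis abs_ge_zero divide_nonneg_nonneg knorm_nonneg mult_left_le_one_le norm_ge_zero)
qed (simp add: riesz2_def zero_prod_def)

lemma norm_partial1_le: "cmod (partial1 f l) \<le> knorm l * cmod (f l)"
  unfolding partial1_def norm_mult using abs_fst_le_knorm[of l] by (intro mult_right_mono) auto

lemma norm_partial2_le: "cmod (partial2 f l) \<le> knorm l * cmod (f l)"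
  unfolding partial2_def norm_mult using abs_snd_le_knorm[of l] by (intro mult_right_mono) auto

text \<open>The two terms combine into the cross product (j_2 l_1 - j_1 l_2) / |j|; bounding
  them separately would lose a factor 2.\<close>

lemma norm_advect_summand_le:
  "cmod (- riesz2 f j * partial1 f l + riesz1 f j * partial2 f l) \<le> cmod (f j) * knorm l * cmod (f l)"
proof (cases "j = 0")
  case False
  define c :: real where "c = of_int (snd j) * of_int (fst l) - of_int (fst j) * of_int (snd l)"
  have nj: "0 < knorm j"
    using knorm_ge_1[OF False] by simp
  have "- riesz2 f j * partial1 f l + riesz1 f j * partial2 f l = complex_of_real (c / knorm j) * f j * f l"
    using False nj
    by (simp add: c_def riesz1_def riesz2_def partial1_def partial2_def zero_prod_def
        field_simps power2_eq_square[symmetric])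
  also have "cmod \<dots> = \<bar>c\<bar> / knorm j * cmod (f j) * cmod (f l)"
    using nj by (simp add: norm_mult norm_divide)
  also have "\<dots> \<le> knorm l * cmod (f j) * cmod (f l)"
    using abs_cross_le_knorm[of j l] nj by (intro mult_right_mono) (auto simp: c_def divide_le_eq mult.commute)
  finally show ?thesis
    by (simp add: algebra_simps)
qed (simp add: riesz1_def riesz2_def zero_prod_def knorm_nonneg)

lemma norm_advect_le:
  assumes h: "(\<lambda>j. cmod (f j) * knorm (k - j) * cmod (f (k - j))) summable_on UNIV"
  shows "cmod (advect (\<lambda>k. - riesz2 f k) (riesz1 f) f k)
    \<le> (\<Sum>\<^sub>\<infinity>j. cmod (f j) * knorm (k - j) * cmod (f (k - j)))"
proof -
  define t1 where "t1 = (\<lambda>j. - riesz2 f j * partial1 f (k - j))"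
  define t2 where "t2 = (\<lambda>j. riesz1 f j * partial2 f (k - j))"
  have "(\<lambda>j. norm (t1 j)) summable_on UNIV"
    using h by (rule Infinite_Sum.abs_summable_on_comparison_test')
      (auto simp: t1_def norm_mult knorm_nonneg mult.assoc intro!: mult_mono norm_riesz2_le norm_partial1_le)
  then have s1: "t1 summable_on UNIV"
    by (rule abs_summable_summable)
  have "(\<lambda>j. norm (t2 j)) summable_on UNIV"
    using h by (rule Infinite_Sum.abs_summable_on_comparison_test')
      (auto simp: t2_def norm_mult knorm_nonneg mult.assoc intro!: mult_mono norm_riesz1_le norm_partial2_le)
  then have s2: "t2 summable_on UNIV"
    by (rule abs_summable_summable)
  have le: "norm (t1 j + t2 j) \<le> cmod (f j) * knorm (k - j) * cmod (f (k - j))" for j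
    unfolding t1_def t2_def by (rule norm_advect_summand_le)
  have a12: "(\<lambda>j. norm (t1 j + t2 j)) summable_on UNIV"
    using h le by (rule Infinite_Sum.abs_summable_on_comparison_test')
  have "advect (\<lambda>k. - riesz2 f k) (riesz1 f) f k = (\<Sum>\<^sub>\<infinity>j. t1 j) + (\<Sum>\<^sub>\<infinity>j. t2 j)"
    by (simp add: advect_def fconv_def t1_def t2_def minus_prod_def)
  also have "\<dots> = (\<Sum>\<^sub>\<infinity>j. t1 j + t2 j)"
    using s1 s2 by (rule infsum_add[symmetric])
  also have "norm \<dots> \<le> (\<Sum>\<^sub>\<infinity>j. norm (t1 j + t2 j))"
    using a12 by (rule norm_infsum_bound)
  also have "\<dots> \<le> (\<Sum>\<^sub>\<infinity>j. cmod (f j) * knorm (k - j) * cmod (f (k - j)))"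
    using a12 h le by (rule infsum_mono)
  finally show ?thesis .
qed

lemma weight_split_le:
  fixes nj nl nk r :: real
  assumes tri: "nk \<le> nj + nl" and nj: "1 \<le> nj" and nl: "1 \<le> nl" and nk: "0 \<le> nk" and r: "1/2 \<le> r"
  shows "nl * nk powr (2*r) \<le> 2 powr r * nk powr (r + 1/2) * (nl powr (r + 1/2) + nj powr r * nl powr (1/2))"
proof -
  let ?m = "max nj nl"
  have "nk powr (r - 1/2) \<le> (2 * ?m) powr (r - 1/2)"
    using assms by (intro powr_mono2) auto
  also have "\<dots> \<le> 2 powr r * ?m powr (r - 1/2)"
    using nj by (simp add: powr_mult mult_right_mono powr_mono)
  finally have km: "nk powr (r - 1/2) \<le> 2 powr r * ?m powr (r - 1/2)" .
  have ml: "nl * ?m powr (r - 1/2) \<le> nl powr (r + 1/2) + nj powr r * nl powr (1/2)"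
  proof (cases "nj \<le> nl")
    case True
    have "nl * ?m powr (r - 1/2) = nl powr (r + 1/2)"
      using True nl powr_mult_base[of nl "r - 1/2"] by (simp add: max_def add.commute)
    then show ?thesis
      by simp
  next
    case False
    have "nl = nl powr (1/2) * nl powr (1/2)"
      using nl by (simp flip: powr_add)
    also have "\<dots> \<le> nl powr (1/2) * nj powr (1/2)"
      using False nl by (intro mult_left_mono powr_mono2) auto
    finally have "nl * nj powr (r - 1/2) \<le> nl powr (1/2) * nj powr (1/2) * nj powr (r - 1/2)"
      by (intro mult_right_mono) auto
    also have "\<dots> = nj powr r * nl powr (1/2)"
      by (simp add: mult.assoc flip: powr_add)
    finally show ?thesis
      using False by (simp add: max_def add_increasing)
  qed
  have "nl * nk powr (2*r) = nl * nk powr (r - 1/2) * nk powr (r + 1/2)"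
    by (simp add: mult.assoc flip: powr_add)
  also have "\<dots> \<le> nl * (2 powr r * ?m powr (r - 1/2)) * nk powr (r + 1/2)"
    using km nl by (intro mult_right_mono mult_left_mono) auto
  also have "\<dots> = 2 powr r * nk powr (r + 1/2) * (nl * ?m powr (r - 1/2))"
    by (simp add: algebra_simps)
  also have "\<dots> \<le> 2 powr r * nk powr (r + 1/2) * (nl powr (r + 1/2) + nj powr r * nl powr (1/2))"
    using ml by (intro mult_left_mono) auto
  finally show ?thesis .
qed

lemma advect_weight_le:
  fixes f :: "int \<times> int \<Rightarrow> complex"
  assumes f0: "f 0 = 0" and b: "0 \<le> b" and r: "1/2 \<le> r"
  shows "cmod (f j) * knorm (k - j) * cmod (f (k - j)) * gev_weight (2*r) (2*b) f k
    \<le> 2 powr r *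
       (gev_weight 0 b f j * gev_weight (r + 1/2) b f (k - j) * gev_weight (r + 1/2) b f k
        + gev_weight r b f j * gev_weight (1/2) b f (k - j) * gev_weight (r + 1/2) b f k)"
    (is "?lhs \<le> ?rhs")
proof (cases "j = 0 \<or> k - j = 0 \<or> k = 0")
  case True
  then have "?lhs = 0"
    using f0 by (auto simp: gev_weight_def)
  moreover have "0 \<le> ?rhs"
    by (simp add: gev_weight_nonneg)
  ultimately show ?thesis
    by linarith
next
  case False
  define l where "l = k - j"
  define nj nl nk where "nj = knorm j" and "nl = knorm l" and "nk = knorm k"
  have nj: "1 \<le> nj" and nl: "1 \<le> nl" and nk: "0 \<le> nk"
    using False knorm_ge_1 knorm_nonneg by (auto simp: nj_def nl_def nk_def l_def)
  have tri: "nk \<le> nj + nl"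
    unfolding nj_def nl_def nk_def l_def by (rule knorm_triangle_diff)
  have exp_le: "exp (2*b*nk) \<le> exp (b*nj) * exp (b*nl) * exp (b*nk)"
    using mult_left_mono[OF tri b] by (simp add: algebra_simps flip: exp_add)
  have "?lhs = (cmod (f j) * cmod (f l) * cmod (f k)) * (nl * nk powr (2*r)) * exp (2*b*nk)"
    by (simp add: gev_weight_def l_def nl_def nk_def algebra_simps)
  also have "\<dots> \<le> (cmod (f j) * cmod (f l) * cmod (f k))
      * (2 powr r * nk powr (r + 1/2) * (nl powr (r + 1/2) + nj powr r * nl powr (1/2)))
      * (exp (b*nj) * exp (b*nl) * exp (b*nk))"
    by (rule mult_mono[OF mult_left_mono[OF weight_split_le[OF tri nj nl nk r]] exp_le]) auto
  also have "\<dots> = ?rhs"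
    using nj by (simp add: gev_weight_def nj_def nl_def nk_def l_def algebra_simps)
  finally show ?thesis .
qed

lemma sum_convolution_le_lattice_zeta:
  fixes P Q R :: "int \<times> int \<Rightarrow> real"
  assumes F: "finite F" and r: "1 < r" and P0: "P 0 = 0"
    and "\<And>x. 0 \<le> P x" "\<And>x. 0 \<le> Q x" "\<And>x. 0 \<le> R x"
    and P: "(\<lambda>x. (knorm x powr r * P x)\<^sup>2) summable_on UNIV"
    and "(\<lambda>x. (Q x)\<^sup>2) summable_on UNIV" "(\<lambda>x. (R x)\<^sup>2) summable_on UNIV"
  shows "(\<Sum>(j,k)\<in>F. P j * Q (k - j) * R k)
    \<le> sqrt (lattice_zeta (2*r)) * sqrt (\<Sum>\<^sub>\<infinity>x. (knorm x powr r * P x)\<^sup>2)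
       * sqrt (\<Sum>\<^sub>\<infinity>x. (Q x)\<^sup>2) * sqrt (\<Sum>\<^sub>\<infinity>x. (R x)\<^sup>2)"
proof -
  have "(\<Sum>(j,k)\<in>F. P j * Q (k - j) * R k)
      \<le> (\<Sum>j\<in>fst ` F. P j) * sqrt (\<Sum>\<^sub>\<infinity>x. (Q x)\<^sup>2) * sqrt (\<Sum>\<^sub>\<infinity>x. (R x)\<^sup>2)"
    using assms by (intro sum_convolution_le) auto
  also have "\<dots> \<le> sqrt (lattice_zeta (2*r)) * sqrt (\<Sum>\<^sub>\<infinity>x. (knorm x powr r * P x)\<^sup>2)
      * sqrt (\<Sum>\<^sub>\<infinity>x. (Q x)\<^sup>2) * sqrt (\<Sum>\<^sub>\<infinity>x. (R x)\<^sup>2)"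
    using F r P0 P by (intro mult_right_mono sum_le_sqrt_lattice_zeta) (auto intro: infsum_nonneg)
  finally show ?thesis .
qed

lemma summable_on_mult_of_summable_sq:
  fixes x y :: "'a \<Rightarrow> real"
  assumes "(\<lambda>i. (x i)\<^sup>2) summable_on A" "(\<lambda>i. (y i)\<^sup>2) summable_on A"
  shows "(\<lambda>i. x i * y i) summable_on A"
proof (rule abs_summable_summable[OF abs_summable_product])
  show "(\<lambda>i. norm (x i * x i)) summable_on A" "(\<lambda>i. norm (y i * y i)) summable_on A"
    using assms by (simp_all add: power2_eq_square abs_mult)
qed

lemma has_sum_finite_sum:
  fixes f :: "'k \<Rightarrow> 'a \<Rightarrow> 'b::topological_comm_monoid_add"
  assumes "finite K" "\<And>k. k \<in> K \<Longrightarrow> (f k has_sum S k) A"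
  shows "((\<lambda>x. \<Sum>k\<in>K. f k x) has_sum (\<Sum>k\<in>K. S k)) A"
  using assms by (induction K rule: finite_induct) (auto intro!: has_sum_add)

lemma norm_infsum_le_finite_double_sums:
  fixes X G :: "'a \<Rightarrow> complex" and h :: "'a \<Rightarrow> 'b \<Rightarrow> real"
  assumes h: "\<And>k. h k summable_on UNIV" and X: "\<And>k. cmod (X k) \<le> (\<Sum>\<^sub>\<infinity>j. h k j)"
    and finite_sums: "\<And>J K. finite J \<Longrightarrow> finite K \<Longrightarrow> (\<Sum>k\<in>K. \<Sum>j\<in>J. h k j * cmod (G k)) \<le> B"
    and B: "0 \<le> B"
  shows "cmod (\<Sum>\<^sub>\<infinity>k. X k * cnj (G k)) \<le> B"
proof (cases "(\<lambda>k. X k * cnj (G k)) summable_on UNIV")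
  case True
  have "cmod (\<Sum>\<^sub>\<infinity>k. X k * cnj (G k)) \<le> (\<Sum>\<^sub>\<infinity>k. cmod (X k * cnj (G k)))"
    using True by (intro norm_infsum_bound) (simp add: summable_on_iff_abs_summable_on_complex)
  also have "\<dots> \<le> B"
  proof (rule infsum_le_finite_sums)
    show "(\<lambda>k. cmod (X k * cnj (G k))) summable_on UNIV"
      using True by (simp add: summable_on_iff_abs_summable_on_complex)
    fix K :: "'a set"
    assume K: "finite K"
    have sum_h: "((\<lambda>j. \<Sum>k\<in>K. h k j * cmod (G k)) has_sum (\<Sum>k\<in>K. (\<Sum>\<^sub>\<infinity>j. h k j) * cmod (G k))) UNIV"
      using K h by (intro has_sum_finite_sum has_sum_cmult_left has_sum_infsum)
    have "(\<Sum>k\<in>K. cmod (X k * cnj (G k))) \<le> (\<Sum>k\<in>K. (\<Sum>\<^sub>\<infinity>j. h k j) * cmod (G k))"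
      unfolding norm_mult complex_mod_cnj using X by (intro sum_mono mult_right_mono) auto
    also have "\<dots> \<le> B"
      using sum_h
    proof (rule has_sum_le_finite_sums)
      show "(\<Sum>j\<in>J. \<Sum>k\<in>K. h k j * cmod (G k)) \<le> B" if "finite J" for J
        using finite_sums[OF that K] by (simp add: sum.swap[of _ J])
    qed
    finally show "(\<Sum>k\<in>K. cmod (X k * cnj (G k))) \<le> B" .
  qed
  finally show ?thesis .
qed (simp add: infsum_not_exists B)

lemma summable_on_advect_kernel:
  fixes f :: "int \<times> int \<Rightarrow> complex"
  assumes f0: "f 0 = 0" and b: "0 \<le> b" and r: "1/2 \<le> r"
    and sq0: "(\<lambda>k. (gev_weight r b f k)\<^sup>2) summable_on UNIV"
    and sq1: "(\<lambda>k. (gev_weight (r + 1/2) b f k)\<^sup>2) summable_on UNIV"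
  shows "(\<lambda>j. cmod (f j) * knorm (k - j) * cmod (f (k - j))) summable_on UNIV"
proof (rule summable_on_comparison_test)
  have "(\<lambda>j. (gev_weight (r + 1/2) b f (k - j))\<^sup>2) summable_on UNIV"
    using summable_on_reindex_bij_betw[OF bij_diff, of "\<lambda>l. (gev_weight (r + 1/2) b f l)\<^sup>2" k] sq1
    by simp
  then show "(\<lambda>j. gev_weight r b f j * gev_weight (r + 1/2) b f (k - j)) summable_on UNIV"
    using sq0 by (rule summable_on_mult_of_summable_sq[rotated])
  have norm_le: "cmod (f j) \<le> gev_weight r b f j" for j
    using knorm_powr_mult_norm_le_gev_weight[of j 0 r b f] knorm_ge_1[of j] f0 b r
    by (cases "j = 0") (auto simp: gev_weight_nonneg)
  have knorm_le: "knorm l * cmod (f l) \<le> gev_weight (r + 1/2) b f l" for l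
    using knorm_powr_mult_norm_le_gev_weight[of l 1 "r + 1/2" b f] b r
    by (cases "l = 0") (auto simp: gev_weight_nonneg knorm_nonneg)
  show "cmod (f j) * knorm (k - j) * cmod (f (k - j)) \<le> gev_weight r b f j * gev_weight (r + 1/2) b f (k - j)" for j
    unfolding mult.assoc using norm_le knorm_le
    by (intro mult_mono) (auto simp: knorm_nonneg gev_weight_nonneg)
  show "0 \<le> cmod (f j) * knorm (k - j) * cmod (f (k - j))" for j
    by (simp add: knorm_nonneg)
qed

lemma sum_advect_weight_le:
  fixes f :: "int \<times> int \<Rightarrow> complex"
  assumes F: "finite F" and f0: "f 0 = 0" and b: "0 \<le> b" and r: "1 < r"
    and sq0: "(\<lambda>k. (gev_weight r b f k)\<^sup>2) summable_on UNIV"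
    and sq1: "(\<lambda>k. (gev_weight (r + 1/2) b f k)\<^sup>2) summable_on UNIV"
  shows "(\<Sum>(j,k)\<in>F. cmod (f j) * knorm (k - j) * cmod (f (k - j)) * gev_weight (2*r) (2*b) f k)
    \<le> 2 * 2 powr r * sqrt (lattice_zeta (2*r)) * gev_weight_norm r b f * (gev_weight_norm (r + 1/2) b f)\<^sup>2"
proof -
  let ?w = "\<lambda>s. gev_weight s b f"
  let ?C = "sqrt (lattice_zeta (2*r))"
  let ?N0 = "gev_weight_norm r b f" and ?N1 = "gev_weight_norm (r + 1/2) b f"
  have shift: "(\<lambda>k. (knorm k powr r * ?w s k)\<^sup>2) = (\<lambda>k. (?w (r + s) k)\<^sup>2)" for s
    by (simp add: knorm_powr_mult_gev_weight)
  have "(\<Sum>(j,k)\<in>F. cmod (f j) * knorm (k - j) * cmod (f (k - j)) * gev_weight (2*r) (2*b) f k)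
      \<le> (\<Sum>(j,k)\<in>F. 2 powr r * (?w 0 j * ?w (r + 1/2) (k - j) * ?w (r + 1/2) k
                                  + ?w r j * ?w (1/2) (k - j) * ?w (r + 1/2) k))"
    using advect_weight_le[of f b r] f0 b r by (intro sum_mono) (auto simp: split_beta)
  also have "\<dots> = 2 powr r * ((\<Sum>(j,k)\<in>F. ?w 0 j * ?w (r + 1/2) (k - j) * ?w (r + 1/2) k)
                              + (\<Sum>(j,k)\<in>F. ?w r j * ?w (1/2) (k - j) * ?w (r + 1/2) k))"
    by (simp only: split_def distrib_left sum_distrib_left sum.distrib)
  also have "\<dots> \<le> 2 powr r * (?C * ?N0 * ?N1 * ?N1 + ?C * ?N1 * ?N0 * ?N1)"
  proof -
    have "(\<Sum>(j,k)\<in>F. ?w 0 j * ?w (r + 1/2) (k - j) * ?w (r + 1/2) k) \<le> ?C * ?N0 * ?N1 * ?N1"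
      using sum_convolution_le_lattice_zeta[OF F r, of "?w 0" "?w (r + 1/2)" "?w (r + 1/2)"] sq0 sq1
      by (simp add: shift gev_weight_nonneg gev_weight_norm_def)
    \<comment> \<open>substituting l = k - j moves the factor weighted by |l|^{1/2} into the l^1 slot\<close>
    moreover have "(\<Sum>(j,k)\<in>F. ?w r j * ?w (1/2) (k - j) * ?w (r + 1/2) k)
        = (\<Sum>(l,k)\<in>(\<lambda>(j,k). (k - j, k)) ` F. ?w (1/2) l * ?w r (k - l) * ?w (r + 1/2) k)"
      by (subst sum.reindex) (auto simp: inj_on_def split_beta intro!: sum.cong)
    moreover have "\<dots> \<le> ?C * ?N1 * ?N0 * ?N1"
      using sum_convolution_le_lattice_zeta[OF finite_imageI[OF F] r, of "?w (1/2)" "?w r" "?w (r + 1/2)"] sq0 sq1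
      by (simp add: shift gev_weight_nonneg gev_weight_norm_def)
    ultimately show ?thesis
      by (intro mult_left_mono add_mono) auto
  qed
  also have "\<dots> = 2 * 2 powr r * ?C * ?N0 * ?N1\<^sup>2"
    by (simp add: power2_eq_square algebra_simps)
  finally show ?thesis .
qed

lemma one_le_two_pi_C_W:
  assumes "3/2 < r"
  shows "1 \<le> 2 * pi * C_W r"
  using assms by (simp add: C_W_def le_divide_eq)

lemma norm_advect_pairing_le:
  fixes f :: "int \<times> int \<Rightarrow> complex"
  assumes f0: "f 0 = 0" and b: "0 \<le> b" and r: "1 < r"
    and sq1: "(\<lambda>k. (gev_weight (r + 1/2) b f k)\<^sup>2) summable_on UNIV"
  shows "cmod (\<Sum>\<^sub>\<infinity>k. advect (\<lambda>k. - riesz2 f k) (riesz1 f) f k * cnj (Lambda_pow (2*r) (exp_Lambda (2*b) f) k))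
    \<le> 2 * 2 powr r * sqrt (lattice_zeta (2*r)) * gev_weight_norm r b f * (gev_weight_norm (r + 1/2) b f)\<^sup>2"
proof (rule norm_infsum_le_finite_double_sums)
  have sq0: "(\<lambda>k. (gev_weight r b f k)\<^sup>2) summable_on UNIV"
    using sq1 by (rule summable_on_comparison_test) (simp_all add: power_mono gev_weight_mono gev_weight_nonneg)
  show kernel: "(\<lambda>j. cmod (f j) * knorm (k - j) * cmod (f (k - j))) summable_on UNIV" for k
    using f0 b r sq0 sq1 by (intro summable_on_advect_kernel) auto
  show "cmod (advect (\<lambda>k. - riesz2 f k) (riesz1 f) f k) \<le> (\<Sum>\<^sub>\<infinity>j. cmod (f j) * knorm (k - j) * cmod (f (k - j)))" for k
    using kernel by (rule norm_advect_le)
  show "(\<Sum>k\<in>K. \<Sum>j\<in>J. cmod (f j) * knorm (k - j) * cmod (f (k - j)) * cmod (Lambda_pow (2*r) (exp_Lambda (2*b) f) k))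
      \<le> 2 * 2 powr r * sqrt (lattice_zeta (2*r)) * gev_weight_norm r b f * (gev_weight_norm (r + 1/2) b f)\<^sup>2"
    if "finite J" "finite K" for J K
    using sum_advect_weight_le[of "J \<times> K" f b r] that f0 b r sq0 sq1
    by (subst sum.swap) (simp add: norm_Lambda_pow_exp_Lambda sum.cartesian_product)
  show "0 \<le> 2 * 2 powr r * sqrt (lattice_zeta (2*r)) * gev_weight_norm r b f * (gev_weight_norm (r + 1/2) b f)\<^sup>2"
    using lattice_zeta_ge_1[of "2*r"] r by (simp add: gev_weight_norm_nonneg)
qed

theorem mainTheorem5:
  "\<exists>C>0. \<forall>r b (eta :: int \<times> int \<Rightarrow> complex).
     r > 3/2 \<longrightarrow> b > 0 \<longrightarrow> eta (0,0) = 0 \<longrightarrow>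
     (\<lambda>k. knorm k powr (2*r) * exp (2*b*knorm k) * (cmod (Lambda_pow (1/2) eta k))\<^sup>2)
        summable_on (-{(0,0)}) \<longrightarrow>
     cmod (l2_inner (advect (\<lambda>k. - riesz2 eta k) (riesz1 eta) eta)
                    (Lambda_pow (2*r) (exp_Lambda (2*b) eta)))
       \<le> C * 2 powr r * C_W r * gev_norm r b eta * (gev_norm r b (Lambda_pow (1/2) eta))\<^sup>2"
proof (intro exI[of _ "2 * sqrt (lattice_zeta 3)"] conjI allI impI)
  show "0 < 2 * sqrt (lattice_zeta 3)"
    using lattice_zeta_ge_1[of 3] by simp
  fix r b :: real and eta :: "int \<times> int \<Rightarrow> complex"
  assume r: "3/2 < r" and b: "0 < b" and mean_zero: "eta (0,0) = 0"
    and summable: "(\<lambda>k. knorm k powr (2*r) * exp (2*b*knorm k) * (cmod (Lambda_pow (1/2) eta k))\<^sup>2)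
        summable_on (-{(0,0)})"
  let ?N0 = "gev_weight_norm r b eta" and ?N1 = "gev_weight_norm (r + 1/2) b eta"
  have sq1: "(\<lambda>k. (gev_weight (r + 1/2) b eta k)\<^sup>2) summable_on UNIV"
    using summable by (subst summable_on_cong_neutral[where T = "-{(0,0)}"])
      (auto simp: gev_norm_summand_eq gev_weight_Lambda_pow zero_prod_def[symmetric])
  have eta0: "eta 0 = 0"
    using mean_zero by (simp add: zero_prod_def)
  have "cmod (l2_inner (advect (\<lambda>k. - riesz2 eta k) (riesz1 eta) eta) (Lambda_pow (2*r) (exp_Lambda (2*b) eta)))
      = (2*pi)\<^sup>2 * cmod (\<Sum>\<^sub>\<infinity>k. advect (\<lambda>k. - riesz2 eta k) (riesz1 eta) eta k
                                * cnj (Lambda_pow (2*r) (exp_Lambda (2*b) eta) k))"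
    by (simp add: l2_inner_def norm_mult norm_power)
  also have "\<dots> \<le> (2*pi)\<^sup>2 * (2 * 2 powr r * sqrt (lattice_zeta (2*r)) * ?N0 * ?N1\<^sup>2)"
    using norm_advect_pairing_le[OF eta0 _ _ sq1] b r by (intro mult_left_mono) auto
  also have "\<dots> \<le> (2*pi)\<^sup>2 * (2 * 2 powr r * sqrt (lattice_zeta 3) * ?N0 * ?N1\<^sup>2)"
    using r lattice_zeta_antimono[of 3 "2*r"]
    by (intro mult_left_mono mult_right_mono) (auto simp: gev_weight_norm_nonneg)
  also have "\<dots> \<le> (2 * pi * C_W r) * ((2*pi)\<^sup>2 * (2 * 2 powr r * sqrt (lattice_zeta 3) * ?N0 * ?N1\<^sup>2))"
  proof -
    have "0 \<le> (2*pi)\<^sup>2 * (2 * 2 powr r * sqrt (lattice_zeta 3) * ?N0 * ?N1\<^sup>2)"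
      using lattice_zeta_ge_1[of 3] by (simp add: gev_weight_norm_nonneg)
    from mult_right_mono[OF one_le_two_pi_C_W[OF r] this] show ?thesis
      by simp
  qed
  also have "\<dots> = 2 * sqrt (lattice_zeta 3) * 2 powr r * C_W r * gev_norm r b eta * (gev_norm r b (Lambda_pow (1/2) eta))\<^sup>2"
    by (simp add: gev_norm_eq gev_weight_norm_Lambda_pow power2_eq_square algebra_simps)
  finally show "cmod (l2_inner (advect (\<lambda>k. - riesz2 eta k) (riesz1 eta) eta) (Lambda_pow (2*r) (exp_Lambda (2*b) eta)))
      \<le> 2 * sqrt (lattice_zeta 3) * 2 powr r * C_W r * gev_norm r b eta * (gev_norm r b (Lambda_pow (1/2) eta))\<^sup>2" .
qed

end
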